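(* Let $K$ be a field of characteristic zero, $R=K[x,y,z]$ with the standard grading, and let $a,b,c,\beta,\gamma$ be integers with $a\geq c\geq 2$, $1\leq \beta\leq b-1$ and $\max\{1,b-a+1\}\leq \gamma\leq \min\{b-1,c-1\}$. Consider the ideal $$I=(x^a,\ y^b-x^{b-\gamma}z^\gamma,\ z^c,\ x^{a-b+\gamma}y^{b-\beta},\ y^{b-\beta}z^{c-\gamma})\subset R.$$ If $a\leq 2b-c$, then $R/I$ has the weak Lefschetz property for every $\beta$ with $|a-b|+c-1\leq \beta\leq b-1$.
   Context: A graded Artinian $K$-algebra $A=\bigoplus_i [A]_i$ has the weak Lefschetz property (WLP) if there exists a linear form $L\in[A]_1$ such that the multiplication map $\times L:[A]_i\to[A]_{i+1}$ has maximal rank (i.e. is injective or surjective) for every $i$. *)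

theory Defs
  imports Main "HOL-Library.Poly_Mapping" "HOL-Library.Product_Plus"
begin

text \<open>Polynomials in three variables x, y, z over a field: finitely supported
  maps from exponent vectors (i,j,k) (standing for x^i y^j z^k) to coefficients,
  with the convolution product of HOL-Library.Poly_Mapping.\<close>

type_synonym 'k poly3 = "(nat \<times> nat \<times> nat) \<Rightarrow>\<^sub>0 'k"

definition varX :: "'k::comm_ring_1 poly3" where
  "varX = Poly_Mapping.single (1, 0, 0) 1"
definition varY :: "'k::comm_ring_1 poly3" where
  "varY = Poly_Mapping.single (0, 1, 0) 1"
definition varZ :: "'k::comm_ring_1 poly3" where
  "varZ = Poly_Mapping.single (0, 0, 1) 1"

definition mdeg :: "nat \<times> nat \<times> nat \<Rightarrow> nat" where
  "mdeg m = fst m + fst (snd m) + snd (snd m)"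

definition homog :: "nat \<Rightarrow> 'k::comm_ring_1 poly3 set" where
  "homog d = {f. \<forall>m \<in> Poly_Mapping.keys f. mdeg m = d}"

definition ideal_gen :: "'k::comm_ring_1 poly3 list \<Rightarrow> 'k poly3 set" where
  "ideal_gen gs = {f. \<exists>hs. f = (\<Sum>i<length gs. hs i * gs ! i)}"

text \<open>Maximal rank of multiplication by L from [R/I]_i to [R/I]_(i+1), written out
  on representatives: injectivity, or surjectivity.\<close>
definition mult_inj :: "'k::comm_ring_1 poly3 set \<Rightarrow> 'k poly3 \<Rightarrow> nat \<Rightarrow> bool" where
  "mult_inj I L i = (\<forall>f \<in> homog i. L * f \<in> I \<longrightarrow> f \<in> I)"

definition mult_surj :: "'k::comm_ring_1 poly3 set \<Rightarrow> 'k poly3 \<Rightarrow> nat \<Rightarrow> bool" where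
  "mult_surj I L i = (\<forall>g \<in> homog (Suc i). \<exists>f \<in> homog i. g - L * f \<in> I)"

definition has_WLP :: "'k::comm_ring_1 poly3 set \<Rightarrow> bool" where
  "has_WLP I = (\<exists>L \<in> homog 1. \<forall>i. mult_inj I L i \<or> mult_surj I L i)"

end

theory Submission
  imports Defs
begin

text \<open>
  Modulo I the binomial y^b - x^(b-\<gamma>) z^\<gamma> reduces every monomial to one of y-degree below b,
  and the reduced monomials divisible by none of x^a, z^c, x^(a-b+\<gamma>) y^(b-\<beta>), y^(b-\<beta>) z^(c-\<gamma>)
  form a basis of R/I; the normal form nf is linear with kernel exactly I.
  Sort the basis monomials x^i y^j z^k of degree d by k mod \<gamma> and index them by
  J = b (k div \<gamma>) + j. Multiplication by x keeps J and multiplication by y sends J to J + 1,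
  also across y^b = x^(b-\<gamma>) z^\<gamma>. So in these bases multiplication by L = x + y from degree d
  to degree d + 1 is a direct sum of maps w \<mapsto> (w J + w (J - 1))_J, from the indices of basis
  monomials of degree d (sources) to those of degree d + 1 (targets). Such a map is injective if
  no run J1, ..., J2 of sources has both J1 and J2 + 1 outside the targets, and surjective if every
  target is joined by a run of sources to a non-target on one side, alternating signs along the run
  giving a preimage. The inequalities on a, b, c, \<beta>, \<gamma> yield the first property for
  2 d + 3 < a + b + c - \<beta> and the second one otherwise. Only the coefficients 0 and \<plusminus>1
  occur, so the argument works over any commutative ring.
\<close>

lemma ideal_gen_zero: "0 \<in> ideal_gen gs"
  unfolding ideal_gen_def by (auto intro!: exI[of _ "\<lambda>_. 0"])

lemma ideal_gen_add:
  assumes "f \<in> ideal_gen gs" and "h \<in> ideal_gen gs"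
  shows "f + h \<in> ideal_gen gs"
proof -
  obtain fs hs where "f = (\<Sum>i<length gs. fs i * gs ! i)" and "h = (\<Sum>i<length gs. hs i * gs ! i)"
    using assms unfolding ideal_gen_def by blast
  then have "f + h = (\<Sum>i<length gs. (fs i + hs i) * gs ! i)"
    by (simp add: sum.distrib distrib_right)
  then show ?thesis
    unfolding ideal_gen_def by (auto intro!: exI[of _ "\<lambda>i. fs i + hs i"])
qed

lemma ideal_gen_mult_left:
  assumes "f \<in> ideal_gen gs"
  shows "h * f \<in> ideal_gen gs"
proof -
  obtain fs where "f = (\<Sum>i<length gs. fs i * gs ! i)"
    using assms unfolding ideal_gen_def by blast
  then have "h * f = (\<Sum>i<length gs. (h * fs i) * gs ! i)"
    by (simp add: sum_distrib_left mult.assoc)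
  then show ?thesis
    unfolding ideal_gen_def by (auto intro!: exI[of _ "\<lambda>i. h * fs i"])
qed

lemma ideal_gen_sum: "(\<And>x. x \<in> A \<Longrightarrow> f x \<in> ideal_gen gs) \<Longrightarrow> sum f A \<in> ideal_gen gs"
  by (induction A rule: infinite_finite_induct) (auto intro: ideal_gen_zero ideal_gen_add)

lemma ideal_gen_generator:
  assumes "g \<in> set gs"
  shows "g \<in> ideal_gen gs"
proof -
  obtain i where i: "i < length gs" "g = gs ! i"
    using assms by (auto simp: in_set_conv_nth)
  have "(\<Sum>j<length gs. of_bool (j = i) * gs ! j) = (\<Sum>j<length gs. if j = i then gs ! j else 0)"
    by (intro sum.cong) auto
  also have "\<dots> = g"
    using i by simp
  finally have "(\<Sum>j<length gs. of_bool (j = i) * gs ! j) = g" .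
  then show ?thesis
    unfolding ideal_gen_def by (auto intro!: exI[of _ "\<lambda>j. of_bool (j = i)"])
qed

lemma poly_mapping_sum_single:
  "f = (\<Sum>m\<in>Poly_Mapping.keys f. Poly_Mapping.single m (Poly_Mapping.lookup f m))"
  by (rule poly_mapping_eqI) (simp add: lookup_sum lookup_single when_def in_keys_iff)

lemma sum_keys_delta:
  "(\<Sum>m\<in>Poly_Mapping.keys v. if m = m0 \<and> P then Poly_Mapping.lookup v m else 0)
    = (if P then Poly_Mapping.lookup v m0 else 0)"
  by (cases P) (simp_all add: sum.delta in_keys_iff)

lemma mdeg_triple [simp]: "mdeg (i, j, k) = i + j + k"
  by (simp add: mdeg_def)

lemma mdeg_add: "mdeg (m + n) = mdeg m + mdeg n"
  by (simp add: mdeg_def)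

lemma varX_power: "(varX :: 'k::comm_ring_1 poly3) ^ n = Poly_Mapping.single (n, 0, 0) 1"
  by (induction n) (simp_all add: varX_def mult_single flip: zero_prod_def)

lemma varY_power: "(varY :: 'k::comm_ring_1 poly3) ^ n = Poly_Mapping.single (0, n, 0) 1"
  by (induction n) (simp_all add: varY_def mult_single flip: zero_prod_def)

lemma varZ_power: "(varZ :: 'k::comm_ring_1 poly3) ^ n = Poly_Mapping.single (0, 0, n) 1"
  by (induction n) (simp_all add: varZ_def mult_single flip: zero_prod_def)

lemma homog_zero: "0 \<in> homog d"
  by (simp add: homog_def)

lemma homog_add: "f \<in> homog d \<Longrightarrow> h \<in> homog d \<Longrightarrow> f + h \<in> homog d"
  using keys_add[of f h] by (auto simp: homog_def)

lemma homog_sum: "(\<And>x. x \<in> A \<Longrightarrow> F x \<in> homog d) \<Longrightarrow> sum F A \<in> homog d"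
  by (induction A rule: infinite_finite_induct) (auto intro: homog_zero homog_add)

lemma homog_single: "mdeg m = d \<Longrightarrow> Poly_Mapping.single m x \<in> homog d"
  by (simp add: homog_def)

lemma homog_mult: "f \<in> homog d \<Longrightarrow> h \<in> homog e \<Longrightarrow> f * h \<in> homog (d + e)"
  using keys_mult[of f h] by (fastforce simp: homog_def mdeg_add)

lemma linear_form_homog: "(varX + varY :: 'k::comm_ring_1 poly3) \<in> homog 1"
  unfolding varX_def varY_def by (intro homog_add homog_single) simp_all

section \<open>Lower bidiagonal maps\<close>

definition bidiag :: "(nat \<Rightarrow> 'a::monoid_add) \<Rightarrow> nat \<Rightarrow> 'a" where
  "bidiag w J = w J + (case J of 0 \<Rightarrow> 0 | Suc I \<Rightarrow> w I)"

lemma bidiag_0 [simp]: "bidiag w 0 = w 0"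
  by (simp add: bidiag_def)

lemma bidiag_Suc [simp]: "bidiag w (Suc J) = w (Suc J) + w J"
  by (simp add: bidiag_def)

lemma bidiag_kernel_trivial:
  fixes w :: "nat \<Rightarrow> 'a::ab_group_add"
  assumes "finite S"
    and supp: "\<And>J. w J \<noteq> 0 \<Longrightarrow> J \<in> S"
    and ker: "\<And>J. J \<in> T \<Longrightarrow> bidiag w J = 0"
    and runs: "\<And>J1 J2. J1 \<le> J2 \<Longrightarrow> {J1..J2} \<subseteq> S \<Longrightarrow> J1 \<in> T \<or> Suc J2 \<in> T"
  shows "w = (\<lambda>_. 0)"
proof (rule ccontr)
  assume "w \<noteq> (\<lambda>_. 0)"
  then have "\<exists>J. w J \<noteq> 0" by auto
  define J1 where "J1 = (LEAST J. w J \<noteq> 0)"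
  have "w J1 \<noteq> 0"
    unfolding J1_def using \<open>\<exists>J. w J \<noteq> 0\<close> by (rule LeastI_ex)
  have below: "w J = 0" if "J < J1" for J
    using not_less_Least[OF that[unfolded J1_def]] by blast
  have "J1 \<notin> T"
  proof
    assume "J1 \<in> T"
    moreover have "bidiag w J1 = w J1"
      using below by (cases J1) auto
    ultimately show False
      using ker \<open>w J1 \<noteq> 0\<close> by simp
  qed
  have run: "{J1..J1 + n} \<subseteq> S \<and> w (J1 + n) \<noteq> 0" for n
  proof (induction n)
    case 0
    then show ?case using \<open>w J1 \<noteq> 0\<close> supp by auto
  next
    case (Suc n)
    then have "Suc (J1 + n) \<in> T"
      using runs[of J1 "J1 + n"] \<open>J1 \<notin> T\<close> by auto
    then have "w (Suc (J1 + n)) + w (J1 + n) = 0"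
      using ker by fastforce
    then have "w (J1 + Suc n) \<noteq> 0"
      using Suc.IH by (auto simp: add_eq_0_iff)
    then show ?case
      using Suc.IH supp by (auto simp: atLeastAtMostSuc_conv)
  qed
  have "{J1..} \<subseteq> S"
  proof
    fix J assume "J \<in> {J1..}"
    then show "J \<in> S" using run[of "J - J1"] by auto
  qed
  then show False
    using \<open>finite S\<close> finite_subset infinite_Ici by blast
qed

lemma bidiag_alternating:
  fixes y :: "'a::comm_ring_1"
  assumes "J1 \<le> J2"
  shows "bidiag (\<lambda>J. if J \<in> {J1..J2} then (- 1) ^ (J - J1) * y else 0) J
       = (if J = J1 then y else if J = Suc J2 then (- 1) ^ (J2 - J1) * y else 0)"
proof (cases J)
  case 0
  then show ?thesis using assms by auto
next
  case (Suc I)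
  show ?thesis
  proof (cases "J1 \<le> I \<and> I < J2")
    case True
    then have "(- 1) ^ (Suc I - J1) = - ((- 1) ^ (I - J1) :: 'a)"
      by (simp add: Suc_diff_le)
    then show ?thesis using True Suc by auto
  next
    case False
    then show ?thesis using Suc assms by auto
  qed
qed

lemma maximal_run_left:
  fixes J0 :: nat
  obtains J1 where "J1 \<le> J0" and "{J1..<J0} \<subseteq> S" and "J1 = 0 \<or> J1 - 1 \<notin> S"
proof (induction J0 arbitrary: thesis)
  case 0
  then show ?case by simp
next
  case (Suc n)
  show ?case
  proof (cases "n \<in> S")
    case True
    obtain J1 where "J1 \<le> n" and "{J1..<n} \<subseteq> S" and "J1 = 0 \<or> J1 - 1 \<notin> S"
      using Suc.IH by blast
    then show ?thesis
      using Suc.prems[of J1] True by (simp add: atLeastLessThanSuc)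
  next
    case False
    then show ?thesis
      using Suc.prems[of "Suc n"] by simp
  qed
qed

lemma maximal_run_right:
  fixes J0 :: nat
  assumes "finite S"
  obtains J2 where "J0 \<le> J2" and "{J0..<J2} \<subseteq> S" and "J2 \<notin> S"
proof -
  obtain N where N: "\<forall>J\<in>S. J < N"
    using assms unfolding finite_nat_set_iff_bounded by blast
  define J2 where "J2 = (LEAST J. J0 \<le> J \<and> J \<notin> S)"
  have "J0 \<le> J2 \<and> J2 \<notin> S"
    unfolding J2_def by (rule LeastI[of _ "J0 + N"]) (use N in auto)
  moreover have "{J0..<J2} \<subseteq> S"
  proof
    fix J assume "J \<in> {J0..<J2}"
    then show "J \<in> S"
      using not_less_Least[of J "\<lambda>J. J0 \<le> J \<and> J \<notin> S"] unfolding J2_def[symmetric] by auto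
  qed
  ultimately show thesis using that by blast
qed

lemma run_through_target:
  assumes "finite S" and "J0 \<in> T"
    and runs: "\<And>J1 J2. J1 \<le> J2 \<Longrightarrow> J1 = 0 \<or> J1 - 1 \<notin> S \<Longrightarrow>
      {J1..J2} \<subseteq> T \<Longrightarrow> {J1..<J2} \<subseteq> S \<Longrightarrow> J2 \<in> S"
  shows "(\<exists>J1<J0. J1 \<notin> T \<and> {J1..<J0} \<subseteq> S) \<or> (\<exists>J2\<ge>J0. Suc J2 \<notin> T \<and> {J0..J2} \<subseteq> S)"
proof (rule ccontr)
  assume none: "\<not> ?thesis"
  obtain J1 where "J1 \<le> J0" and run1: "{J1..<J0} \<subseteq> S" and left_end: "J1 = 0 \<or> J1 - 1 \<notin> S"
    by (rule maximal_run_left)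
  obtain J2 where "J0 \<le> J2" and run2: "{J0..<J2} \<subseteq> S" and "J2 \<notin> S"
    using \<open>finite S\<close> by (rule maximal_run_right)
  have "J \<in> T" if "J1 \<le> J" and "J \<le> J2" for J
  proof (cases J0 J rule: linorder_cases)
    case less
    then obtain I where "J = Suc I" and "J0 \<le> I"
      by (cases J) auto
    moreover have "{J0..I} \<subseteq> S"
      using that run2 \<open>J = Suc I\<close> by auto
    ultimately show ?thesis using none by blast
  next
    case greater
    then have "{J..<J0} \<subseteq> S" using that run1 by auto
    then show ?thesis using none greater by blast
  qed (use \<open>J0 \<in> T\<close> in simp)
  then have "{J1..J2} \<subseteq> T" by auto
  moreover have "{J1..<J2} \<subseteq> S"
    using run1 run2 by fastforce
  ultimately have "J2 \<in> S"
    using \<open>J1 \<le> J0\<close> \<open>J0 \<le> J2\<close> left_end by (intro runs) simp_all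
  then show False using \<open>J2 \<notin> S\<close> by simp
qed

lemma bidiag_unit_vector:
  fixes y :: "'a::comm_ring_1"
  assumes "finite S" and "J0 \<in> T"
    and "\<And>J1 J2. J1 \<le> J2 \<Longrightarrow> J1 = 0 \<or> J1 - 1 \<notin> S \<Longrightarrow>
      {J1..J2} \<subseteq> T \<Longrightarrow> {J1..<J2} \<subseteq> S \<Longrightarrow> J2 \<in> S"
  obtains w where "\<And>J. w J \<noteq> 0 \<Longrightarrow> J \<in> S"
    and "\<And>J. J \<in> T \<Longrightarrow> bidiag w J = (if J = J0 then y else 0)"
proof -
  have "(\<exists>J1<J0. J1 \<notin> T \<and> {J1..<J0} \<subseteq> S) \<or> (\<exists>J2\<ge>J0. Suc J2 \<notin> T \<and> {J0..J2} \<subseteq> S)"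
    using assms by (rule run_through_target)
  then consider (left) J1 where "J1 < J0" and "J1 \<notin> T" and "{J1..<J0} \<subseteq> S"
    | (right) J2 where "J0 \<le> J2" and "Suc J2 \<notin> T" and "{J0..J2} \<subseteq> S"
    by blast
  then show thesis
  proof cases
    case (left J1)
    define w where "w = (\<lambda>J. if J \<in> {J1..J0 - 1} then (- 1) ^ (J - J1) * ((- 1) ^ (J0 - 1 - J1) * y) else 0)"
    have "bidiag w J = (if J = J0 then y else 0)" if "J \<in> T" for J
      unfolding w_def using bidiag_alternating[of J1 "J0 - 1" "(- 1) ^ (J0 - 1 - J1) * y" J] left that
      by (auto simp: mult.assoc[symmetric])
    moreover have "J \<in> S" if "w J \<noteq> 0" for J
      using that left by (auto simp: w_def split: if_splits)
    ultimately show thesis using that by blast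
  next
    case (right J2)
    define w where "w = (\<lambda>J. if J \<in> {J0..J2} then (- 1) ^ (J - J0) * y else 0)"
    have "bidiag w J = (if J = J0 then y else 0)" if "J \<in> T" for J
      unfolding w_def using bidiag_alternating[of J0 J2 y J] right that by auto
    moreover have "J \<in> S" if "w J \<noteq> 0" for J
      using that right by (auto simp: w_def split: if_splits)
    ultimately show thesis using that by blast
  qed
qed

section \<open>Standard monomials and normal form\<close>

text \<open>In the notation of the theorem g = \<gamma>, q = b - \<beta>, B = b - \<gamma>, p = a - b + \<gamma> and r = c - \<gamma>;
  the assumptions qc_le_a and aqc_le_b are the two halves of \<bar>a - b\<bar> + c - 1 \<le> \<beta>.\<close>

locale wlp_ideal =
  fixes a b c g p q r B :: nat
  assumes b_eq: "b = B + g" and a_eq: "a = p + B" and c_eq: "c = r + g"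
    and g_pos: "1 \<le> g" and B_pos: "1 \<le> B" and q_less_b: "q < b"
    and qc_le_a: "q + c \<le> a + 1" and aqc_le_b: "a + q + c \<le> 2 * b + 1"
begin

lemma b_pos: "0 < b"
  using b_eq g_pos by simp

definition gens :: "'k::comm_ring_1 poly3 list" where
  "gens = [Poly_Mapping.single (a, 0, 0) 1,
           Poly_Mapping.single (0, b, 0) 1 - Poly_Mapping.single (B, 0, g) 1,
           Poly_Mapping.single (0, 0, c) 1,
           Poly_Mapping.single (p, q, 0) 1,
           Poly_Mapping.single (0, q, r) 1]"

definition standard :: "nat \<times> nat \<times> nat \<Rightarrow> bool" where
  "standard = (\<lambda>(i, j, k). i < a \<and> j < b \<and> k < c \<and> \<not> (p \<le> i \<and> q \<le> j) \<and> \<not> (q \<le> j \<and> r \<le> k))"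

lemma standard_triple:
  "standard (i, j, k) \<longleftrightarrow> i < a \<and> j < b \<and> k < c \<and> \<not> (p \<le> i \<and> q \<le> j) \<and> \<not> (q \<le> j \<and> r \<le> k)"
  by (simp add: standard_def)

lemma standard_mono: "standard (i, j, k) \<Longrightarrow> i' \<le> i \<Longrightarrow> j' \<le> j \<Longrightarrow> k' \<le> k \<Longrightarrow> standard (i', j', k')"
  by (auto simp: standard_triple)

definition reduce :: "nat \<times> nat \<times> nat \<Rightarrow> nat \<times> nat \<times> nat" where
  "reduce = (\<lambda>(i, j, k). (i + j div b * B, j mod b, k + j div b * g))"

lemma reduce_triple: "reduce (i, j, k) = (i + j div b * B, j mod b, k + j div b * g)"
  by (simp add: reduce_def)

lemma reduce_id: "j < b \<Longrightarrow> reduce (i, j, k) = (i, j, k)"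
  by (simp add: reduce_triple)

lemma reduce_add_b: "reduce (i, j + b, k) = reduce (i + B, j, k + g)"
proof -
  have "(j + b) div b = Suc (j div b)"
    using b_pos by (simp add: div_add_self2)
  then show ?thesis
    by (simp add: reduce_triple algebra_simps)
qed

lemma reduce_Suc:
  assumes "j < b"
  shows "reduce (i, Suc j, k) = (if Suc j < b then (i, Suc j, k) else (i + B, 0, k + g))"
proof (cases "Suc j = b")
  case True
  then show ?thesis using b_pos by (simp add: reduce_triple)
qed (use assms in \<open>simp add: reduce_id\<close>)

lemma mdeg_reduce: "mdeg (reduce m) = mdeg m"
proof -
  obtain i j k where m: "m = (i, j, k)" by (cases m)
  have "j div b * B + j mod b + j div b * g = j div b * b + j mod b"
    using b_eq by (simp add: algebra_simps)
  also have "\<dots> = j" by simp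
  finally show ?thesis by (simp add: m reduce_triple)
qed

lemma standard_reduceD:
  assumes "standard (reduce (i, j, k))"
  shows "i < a \<and> k < c \<and> \<not> (q \<le> j \<and> (p \<le> i \<or> r \<le> k))"
proof -
  have bounds: "i + j div b * B < a" "k + j div b * g < c"
    and gaps: "\<not> (p \<le> i + j div b * B \<and> q \<le> j mod b)" "\<not> (q \<le> j mod b \<and> r \<le> k + j div b * g)"
    using assms by (simp_all add: reduce_triple standard_triple)
  \<comment> \<open>If j mod b < q \<le> j, reduction has multiplied by x^B z^g at least once, which turns
    x^p into x^a and z^r into z^c.\<close>
  have wrapped: "1 \<le> j div b" if "q \<le> j" and "j mod b < q"
    using that div_mult_mod_eq[of j b] by (cases "j div b") auto
  have "\<not> (q \<le> j \<and> (p \<le> i \<or> r \<le> k))"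
  proof
    assume wrap: "q \<le> j \<and> (p \<le> i \<or> r \<le> k)"
    show False
    proof (cases "q \<le> j mod b")
      case True
      then show False using wrap gaps by auto
    next
      case False
      then have "B \<le> j div b * B" and "g \<le> j div b * g"
        using wrapped wrap by simp_all
      from wrap have "p \<le> i \<or> r \<le> k" by simp
      then show False
        using bounds \<open>B \<le> j div b * B\<close> \<open>g \<le> j div b * g\<close> a_eq c_eq by (elim disjE) linarith+
    qed
  qed
  then show ?thesis
    using bounds by simp
qed

definition nf_mon :: "nat \<times> nat \<times> nat \<Rightarrow> 'k::comm_ring_1 \<Rightarrow> 'k poly3" where
  "nf_mon m x = (if standard (reduce m) then Poly_Mapping.single (reduce m) x else 0)"

definition nf :: "'k::comm_ring_1 poly3 \<Rightarrow> 'k poly3" where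
  "nf f = (\<Sum>m\<in>Poly_Mapping.keys f. nf_mon m (Poly_Mapping.lookup f m))"

lemma nf_mon_add: "nf_mon m (x + y) = nf_mon m x + nf_mon m y"
  by (simp add: nf_mon_def single_add)

lemma nf_eq_sum_superset:
  assumes "finite A" and "Poly_Mapping.keys f \<subseteq> A"
  shows "nf f = (\<Sum>m\<in>A. nf_mon m (Poly_Mapping.lookup f m))"
  unfolding nf_def using assms
  by (intro sum.mono_neutral_left) (auto simp: in_keys_iff nf_mon_def)

lemma nf_add: "nf (f + h) = nf f + nf h"
proof -
  let ?A = "Poly_Mapping.keys f \<union> Poly_Mapping.keys h"
  have "nf (f + h) = (\<Sum>m\<in>?A. nf_mon m (Poly_Mapping.lookup (f + h) m))"
    using keys_add[of f h] by (intro nf_eq_sum_superset) auto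
  also have "\<dots> = nf f + nf h"
    by (simp add: lookup_add nf_mon_add sum.distrib nf_eq_sum_superset[of ?A])
  finally show ?thesis .
qed

lemma nf_zero [simp]: "nf 0 = 0"
  by (simp add: nf_def)

lemma nf_mon_uminus: "nf_mon m (- x) = - nf_mon m x"
  by (simp add: nf_mon_def single_uminus)

lemma nf_uminus: "nf (- f) = - nf f"
  by (simp add: nf_def nf_mon_uminus sum_negf)

lemma nf_diff: "nf (f - h) = nf f - nf h"
  using nf_add[of f "- h"] by (simp add: nf_uminus)

lemma nf_sum: "nf (sum F A) = (\<Sum>x\<in>A. nf (F x))"
  by (induction A rule: infinite_finite_induct) (simp_all add: nf_add)

lemma nf_single: "nf (Poly_Mapping.single m x) = nf_mon m x"
  by (cases "x = 0") (simp_all add: nf_def nf_mon_def)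

lemma nf_mult_eq_0:
  assumes "\<And>n x. nf (Poly_Mapping.single n x * G) = 0"
  shows "nf (h * G) = 0"
proof -
  have "h * G = (\<Sum>m\<in>Poly_Mapping.keys h. Poly_Mapping.single m (Poly_Mapping.lookup h m) * G)"
    by (subst poly_mapping_sum_single[of h]) (simp add: sum_distrib_right)
  then show ?thesis
    by (simp add: nf_sum assms)
qed

lemma nf_single_mult_gen:
  assumes "G \<in> set (gens :: 'k::comm_ring_1 poly3 list)"
  shows "nf (Poly_Mapping.single n x * G) = 0"
proof -
  obtain i j k where n: "n = (i, j, k)" by (cases n)
  have "reduce (i, j + b, k) = reduce (i + B, j, k + g)"
    by (rule reduce_add_b)
  moreover have "\<not> standard (reduce (i + a, j, k))" and "\<not> standard (reduce (i, j, k + c))"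
    and "\<not> standard (reduce (i + p, j + q, k))" and "\<not> standard (reduce (i, j + q, k + r))"
    using standard_reduceD by fastforce+
  ultimately show ?thesis
    using assms by (auto simp: gens_def n mult_single nf_single nf_mon_def right_diff_distrib nf_diff)
qed

lemma nf_eq_0_if_in_ideal: "f \<in> ideal_gen gens \<Longrightarrow> nf f = 0"
  unfolding ideal_gen_def by (auto simp: nf_sum intro!: sum.neutral nf_mult_eq_0 nf_single_mult_gen)

lemma single_minus_reduce_in_ideal:
  "Poly_Mapping.single m x - Poly_Mapping.single (reduce m) (x::'k::comm_ring_1) \<in> ideal_gen gens"
proof -
  have step: "Poly_Mapping.single (i, j + b, k) x - Poly_Mapping.single (i + B, j, k + g) (x::'k)
      \<in> ideal_gen gens" for i j k
  proof -
    have "Poly_Mapping.single (i, j, k) x * (gens ! 1) \<in> ideal_gen gens"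
      by (intro ideal_gen_mult_left ideal_gen_generator) (simp add: gens_def)
    then show ?thesis
      by (simp add: gens_def right_diff_distrib mult_single)
  qed
  have iter: "Poly_Mapping.single (i, j + t * b, k) x - Poly_Mapping.single (i + t * B, j, k + t * g) (x::'k)
      \<in> ideal_gen gens" for i j k t
  proof (induction t arbitrary: i k)
    case 0
    then show ?case by (simp add: ideal_gen_zero)
  next
    case (Suc t)
    from ideal_gen_add[OF step[of i "j + t * b" k] Suc.IH[of "i + B" "k + g"]]
    show ?case by (simp add: algebra_simps)
  qed
  obtain i j k where m: "m = (i, j, k)" by (cases m)
  show ?thesis
    using iter[of i "j mod b" "j div b" k] by (simp add: m reduce_triple)
qed

lemma single_in_ideal_if_not_standard:
  assumes "j < b" and "\<not> standard (i, j, k)"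
  shows "Poly_Mapping.single (i, j, k) (x::'k::comm_ring_1) \<in> ideal_gen gens"
proof -
  have multiple: "Poly_Mapping.single (i, j, k) x \<in> ideal_gen gens"
    if "Poly_Mapping.single e 1 \<in> set (gens :: 'k poly3 list)" and "(i, j, k) = e + n" for e n
  proof -
    have "Poly_Mapping.single n x * Poly_Mapping.single e 1 \<in> ideal_gen gens"
      using that by (intro ideal_gen_mult_left ideal_gen_generator)
    then show ?thesis
      using that by (simp add: mult_single add.commute)
  qed
  have "a \<le> i \<or> c \<le> k \<or> (p \<le> i \<and> q \<le> j) \<or> (q \<le> j \<and> r \<le> k)"
    using assms by (auto simp: standard_triple)
  then show ?thesis
  proof (elim disjE)
    assume "a \<le> i"
    then show ?thesis by (intro multiple[of "(a, 0, 0)" "(i - a, j, k)"]) (simp_all add: gens_def)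
  next
    assume "c \<le> k"
    then show ?thesis by (intro multiple[of "(0, 0, c)" "(i, j, k - c)"]) (simp_all add: gens_def)
  next
    assume "p \<le> i \<and> q \<le> j"
    then show ?thesis by (intro multiple[of "(p, q, 0)" "(i - p, j - q, k)"]) (simp_all add: gens_def)
  next
    assume "q \<le> j \<and> r \<le> k"
    then show ?thesis by (intro multiple[of "(0, q, r)" "(i, j - q, k - r)"]) (simp_all add: gens_def)
  qed
qed

lemma single_minus_nf_mon_in_ideal:
  "Poly_Mapping.single m x - nf_mon m (x::'k::comm_ring_1) \<in> ideal_gen gens"
proof (cases "standard (reduce m)")
  case True
  then show ?thesis by (simp add: nf_mon_def single_minus_reduce_in_ideal)
next
  case False
  obtain i j k where m: "reduce m = (i, j, k)" by (cases "reduce m")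
  have "j < b"
    using m b_pos by (cases m) (auto simp: reduce_def)
  then have "Poly_Mapping.single (reduce m) x \<in> ideal_gen gens"
    using False m single_in_ideal_if_not_standard by simp
  from ideal_gen_add[OF single_minus_reduce_in_ideal[of m x] this]
  show ?thesis using False by (simp add: nf_mon_def)
qed

lemma diff_nf_in_ideal: "f - nf f \<in> ideal_gen gens"
proof -
  have "f - nf f = (\<Sum>m\<in>Poly_Mapping.keys f.
      Poly_Mapping.single m (Poly_Mapping.lookup f m) - nf_mon m (Poly_Mapping.lookup f m))"
    by (subst (1) poly_mapping_sum_single[of f]) (simp add: nf_def sum_subtractf)
  also have "\<dots> \<in> ideal_gen gens"
    by (intro ideal_gen_sum single_minus_nf_mon_in_ideal)
  finally show ?thesis .
qed

lemma nf_eq_0_iff: "nf f = 0 \<longleftrightarrow> f \<in> ideal_gen gens"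
  using diff_nf_in_ideal[of f] nf_eq_0_if_in_ideal[of f] by auto

lemma nf_mult_nf: "nf (h * nf f) = nf (h * f)"
proof -
  have "h * f - h * nf f \<in> ideal_gen gens"
    using ideal_gen_mult_left[OF diff_nf_in_ideal, of h f] by (simp add: right_diff_distrib)
  then show ?thesis
    using nf_eq_0_if_in_ideal by (fastforce simp: nf_diff)
qed

lemma keys_nf:
  assumes "m \<in> Poly_Mapping.keys (nf f)"
  shows keys_nf_standard: "standard m" and keys_nf_reduce: "\<exists>m'\<in>Poly_Mapping.keys f. reduce m' = m"
proof -
  have "m \<in> (\<Union>m'\<in>Poly_Mapping.keys f. Poly_Mapping.keys (nf_mon m' (Poly_Mapping.lookup f m')))"
    using assms unfolding nf_def by (rule subsetD[OF keys_sum])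
  then show "standard m" and "\<exists>m'\<in>Poly_Mapping.keys f. reduce m' = m"
    by (auto simp: nf_mon_def split: if_splits)
qed

lemma nf_homog:
  assumes "f \<in> homog d"
  shows "nf f \<in> homog d"
  unfolding homog_def
proof (intro CollectI ballI)
  fix m assume "m \<in> Poly_Mapping.keys (nf f)"
  then obtain m' where "m' \<in> Poly_Mapping.keys f" and "reduce m' = m"
    using keys_nf_reduce by blast
  then show "mdeg m = d"
    using assms mdeg_reduce[of m'] by (auto simp: homog_def)
qed

section \<open>Multiplication by x + y along chains\<close>

text \<open>For k0 < g, the index J = b u + j with j < b stands for the monomial of degree d with
  y-exponent j and z-exponent k0 + g u. The predicate chain_defined excludes the indices at which
  the x-exponent d - (j + k0 + g u) would be truncated to 0.\<close>

definition chain_mon :: "nat \<Rightarrow> nat \<Rightarrow> nat \<Rightarrow> nat \<times> nat \<times> nat" where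
  "chain_mon d k0 J = (d - (J mod b + (k0 + g * (J div b))), J mod b, k0 + g * (J div b))"

definition chain_defined :: "nat \<Rightarrow> nat \<Rightarrow> nat \<Rightarrow> bool" where
  "chain_defined d k0 J \<longleftrightarrow> J mod b + (k0 + g * (J div b)) \<le> d"

definition chain_std :: "nat \<Rightarrow> nat \<Rightarrow> nat \<Rightarrow> bool" where
  "chain_std d k0 J \<longleftrightarrow> chain_defined d k0 J \<and> standard (chain_mon d k0 J)"

lemma block_cases:
  obtains u j where "J = b * u + j" and "j < b"
  using div_mult_mod_eq[of J b] b_pos by (metis add.commute mod_less_divisor mult.commute)

lemma block_mono:
  assumes "b * u1 + j1 \<le> b * u2 + j2" and "j1 < b" and "j2 < b"
  shows "u1 \<le> u2"
proof -
  have "(b * u1 + j1) div b \<le> (b * u2 + j2) div b"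
    using assms(1) by (rule div_le_mono)
  then show ?thesis
    using assms(2,3) by simp
qed

lemma chain_mon_block:
  "j < b \<Longrightarrow> chain_mon d k0 (b * u + j) = (d - (j + (k0 + g * u)), j, k0 + g * u)"
  by (simp add: chain_mon_def)

lemma chain_defined_block: "j < b \<Longrightarrow> chain_defined d k0 (b * u + j) \<longleftrightarrow> j + (k0 + g * u) \<le> d"
  by (simp add: chain_defined_def)

lemma chain_std_block:
  "j < b \<Longrightarrow> chain_std d k0 (b * u + j) \<longleftrightarrow>
    j + (k0 + g * u) \<le> d \<and> standard (d - (j + (k0 + g * u)), j, k0 + g * u)"
  by (simp add: chain_std_def chain_defined_block chain_mon_block)

lemma chain_std_block_end: "chain_std d k0 (b * u + (b - 1)) \<Longrightarrow> b + (k0 + g * u) \<le> Suc d"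
  using chain_std_block[of "b - 1" d k0 u] b_pos by (simp; arith)

lemma mdeg_chain_mon: "chain_defined d k0 J \<Longrightarrow> mdeg (chain_mon d k0 J) = d"
  by (simp add: chain_defined_def chain_mon_def)

lemma chain_coords:
  assumes "standard m" and "mdeg m = d"
  obtains k0 J where "k0 < g" and "chain_std d k0 J" and "chain_mon d k0 J = m"
proof -
  obtain i j k where m: "m = (i, j, k)" by (cases m)
  have "j < b" and "k mod g + g * (k div g) = k" and "d - (j + k) = i"
    using assms by (simp_all add: m standard_triple)
  then have "chain_std d (k mod g) (b * (k div g) + j)" and "chain_mon d (k mod g) (b * (k div g) + j) = m"
    using assms by (simp_all add: m chain_std_block chain_mon_block)
  moreover have "k mod g < g"
    using g_pos by simp
  ultimately show thesis using that by blast
qed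

lemma chain_mon_inj:
  assumes "k0 < g" and "k0' < g" and "chain_mon d k0 J = chain_mon d k0' J'"
  shows "k0 = k0' \<and> J = J'"
proof -
  obtain u j where J: "J = b * u + j" "j < b" by (rule block_cases)
  obtain u' j' where J': "J' = b * u' + j'" "j' < b" by (rule block_cases)
  have "j = j'" and K: "k0 + g * u = k0' + g * u'"
    using assms(3) by (simp_all add: J J' chain_mon_block)
  have "(k0 + g * u) mod g = k0" "(k0 + g * u) div g = u" "(k0' + g * u') mod g = k0'" "(k0' + g * u') div g = u'"
    using assms(1,2) by simp_all
  then show ?thesis
    using K J J' \<open>j = j'\<close> by metis
qed

lemma finite_chain_std: "finite {J. chain_std d k0 J}"
proof (rule finite_subset)
  show "{J. chain_std d k0 J} \<subseteq> {..<b * Suc d}"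
  proof
    fix J assume "J \<in> {J. chain_std d k0 J}"
    moreover obtain u j where J: "J = b * u + j" "j < b" by (rule block_cases)
    ultimately have "g * u \<le> d"
      by (simp add: chain_std_block)
    then have "u \<le> d"
      using g_pos by (metis le_trans mult_1 mult_le_mono1)
    then have "b * u + b \<le> b * Suc d" by simp
    then show "J \<in> {..<b * Suc d}" using J by (simp del: mult_Suc_right)
  qed
qed simp

definition chain_coeff :: "'k::comm_ring_1 poly3 \<Rightarrow> nat \<Rightarrow> nat \<Rightarrow> nat \<Rightarrow> 'k" where
  "chain_coeff v d k0 J = (if chain_defined d k0 J then Poly_Mapping.lookup v (chain_mon d k0 J) else 0)"

lemma chain_coeff_block:
  "j < b \<Longrightarrow> chain_coeff v d k0 (b * u + j) =
    (if j + (k0 + g * u) \<le> d then Poly_Mapping.lookup v (d - (j + (k0 + g * u)), j, k0 + g * u) else 0)"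
  by (simp add: chain_coeff_def chain_defined_block chain_mon_block)

lemma chain_coeff_nonzero:
  "\<forall>m\<in>Poly_Mapping.keys v. standard m \<Longrightarrow> chain_coeff v d k0 J \<noteq> 0 \<Longrightarrow> chain_std d k0 J"
  by (auto simp: chain_coeff_def chain_std_def in_keys_iff split: if_splits)

lemma lookup_nf_linear_form:
  fixes v :: "'k::comm_ring_1 poly3"
  assumes std: "\<forall>m\<in>Poly_Mapping.keys v. standard m" and t: "standard (i, j, k)"
  shows "Poly_Mapping.lookup (nf ((varX + varY) * v)) (i, j, k) =
    (if 1 \<le> i then Poly_Mapping.lookup v (i - 1, j, k) else 0) +
    (if 1 \<le> j then Poly_Mapping.lookup v (i, j - 1, k)
     else if B \<le> i \<and> g \<le> k then Poly_Mapping.lookup v (i - B, b - 1, k - g) else 0)"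
proof -
  let ?t = "(i, j, k)" and ?c = "Poly_Mapping.lookup v"
  have "(varX + varY) * v = (\<Sum>m\<in>Poly_Mapping.keys v.
      Poly_Mapping.single ((1, 0, 0) + m) (?c m) + Poly_Mapping.single ((0, 1, 0) + m) (?c m))"
    by (subst (1) poly_mapping_sum_single[of v])
      (simp add: varX_def varY_def sum_distrib_left distrib_right mult_single)
  then have expand: "Poly_Mapping.lookup (nf ((varX + varY) * v)) ?t =
      (\<Sum>m\<in>Poly_Mapping.keys v. Poly_Mapping.lookup (nf_mon ((1, 0, 0) + m) (?c m)) ?t)
    + (\<Sum>m\<in>Poly_Mapping.keys v. Poly_Mapping.lookup (nf_mon ((0, 1, 0) + m) (?c m)) ?t)"
    by (simp add: nf_sum nf_add nf_single lookup_sum lookup_add sum.distrib)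
  have x_pred: "Poly_Mapping.lookup (nf_mon ((1, 0, 0) + m) (?c m)) ?t
      = (if m = (i - 1, j, k) \<and> 1 \<le> i then ?c m else 0)" if "m \<in> Poly_Mapping.keys v" for m
  proof -
    obtain i' j' k' where m: "m = (i', j', k')" by (cases m)
    have "standard m" using std that by blast
    then have "j' < b" by (simp add: m standard_triple)
    then show ?thesis
      using t by (auto simp: m nf_mon_def reduce_id lookup_single when_def)
  qed
  have y_pred: "Poly_Mapping.lookup (nf_mon ((0, 1, 0) + m) (?c m)) ?t
      = (if m = (if 1 \<le> j then (i, j - 1, k) else (i - B, b - 1, k - g)) \<and> (1 \<le> j \<or> B \<le> i \<and> g \<le> k)
         then ?c m else 0)" if "m \<in> Poly_Mapping.keys v" for m
  proof -
    obtain i' j' k' where m: "m = (i', j', k')" by (cases m)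
    have "standard m" using std that by blast
    then have "j' < b" by (simp add: m standard_triple)
    moreover have "j < b" using t by (simp add: standard_triple)
    ultimately show ?thesis
      using t by (auto simp: m nf_mon_def reduce_Suc lookup_single when_def not_le)
  qed
  show ?thesis
    unfolding expand using x_pred y_pred by (simp add: sum_keys_delta cong: sum.cong)
qed

lemma lookup_nf_linear_form_chain:
  fixes v :: "'k::comm_ring_1 poly3"
  assumes "k0 < g" and "chain_std (Suc d) k0 J" and std: "\<forall>m\<in>Poly_Mapping.keys v. standard m"
  shows "Poly_Mapping.lookup (nf ((varX + varY) * v)) (chain_mon (Suc d) k0 J) = bidiag (chain_coeff v d k0) J"
proof -
  obtain u j where J: "J = b * u + j" "j < b" by (rule block_cases)
  define K where "K = k0 + g * u"
  have fits: "j + K \<le> Suc d" and t: "standard (Suc d - (j + K), j, K)"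
    using assms(2) by (simp_all add: J chain_std_block K_def)
  have x_part: "(if 1 \<le> Suc d - (j + K) then Poly_Mapping.lookup v (Suc d - (j + K) - 1, j, K) else 0)
      = chain_coeff v d k0 J"
    using J by (auto simp: chain_coeff_block K_def Suc_diff_le)
  have y_part: "(if 1 \<le> j then Poly_Mapping.lookup v (Suc d - (j + K), j - 1, K)
      else if B \<le> Suc d - (j + K) \<and> g \<le> K then Poly_Mapping.lookup v (Suc d - (j + K) - B, b - 1, K - g) else 0)
      = (case J of 0 \<Rightarrow> 0 | Suc I \<Rightarrow> chain_coeff v d k0 I)"
  proof (cases j)
    case (Suc j')
    then have "J = Suc (b * u + j')" and "j' < b" using J by simp_all
    then show ?thesis
      using fits Suc by (simp add: chain_coeff_block K_def)
  next
    case 0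
    show ?thesis
    proof (cases u)
      case 0
      then show ?thesis using \<open>j = 0\<close> J \<open>k0 < g\<close> by (simp add: K_def)
    next
      case (Suc u')
      obtain b' where "b = Suc b'"
        using b_pos by (cases b) auto
      then have "b' < b" and "b - 1 = b'" and J': "J = Suc (b * u' + b')"
        using J \<open>j = 0\<close> Suc by simp_all
      have K: "K = k0 + g * u' + g"
        using Suc by (simp add: K_def)
      have "B \<le> Suc d - K \<longleftrightarrow> b' + (k0 + g * u') \<le> d" and "Suc d - K - B = d - (b' + (k0 + g * u'))"
        using b_eq B_pos K \<open>b = Suc b'\<close> by auto
      then show ?thesis
        using \<open>j = 0\<close> K \<open>b - 1 = b'\<close> by (simp add: J' chain_coeff_block[OF \<open>b' < b\<close>])
    qed
  qed
  show ?thesis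
    using lookup_nf_linear_form[OF std t] unfolding bidiag_def x_part y_part by (simp add: J K_def chain_mon_block)
qed

lemma source_y_succ:
  assumes "Suc j < b" and "chain_std d k0 (b * u + j)" and "\<not> chain_std (Suc d) k0 (b * u + Suc j)"
  shows "j < q"
  using assms chain_std_block[of j d k0 u] chain_std_block[of "Suc j" "Suc d" k0 u]
  by (auto simp: standard_triple)

lemma source_x_succ:
  assumes "j < b" and "chain_std d k0 (b * u + j)" and "\<not> chain_std (Suc d) k0 (b * u + j)" and "j < q"
  shows "a \<le> Suc d"
  using assms chain_std_block[of j d k0 u] chain_std_block[of j "Suc d" k0 u]
  by (auto simp: standard_triple Suc_diff_le)

lemma target_y_pred:
  assumes "0 < j" and "j < b" and "chain_std (Suc d) k0 (b * u + j)"
  shows "chain_std d k0 (b * u + (j - 1))"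
proof -
  have "j - 1 < b" using assms(2) by simp
  then show ?thesis
    using assms chain_std_block[of j "Suc d" k0 u] chain_std_block[of "j - 1" d k0 u]
    by (auto elim: standard_mono)
qed

lemma target_x_pred:
  assumes "j < b" and "chain_std (Suc d) k0 (b * u + j)" and "\<not> chain_std d k0 (b * u + j)"
  shows "j + (k0 + g * u) = Suc d"
  using assms chain_std_block[of j "Suc d" k0 u] chain_std_block[of j d k0 u]
  by (auto elim: standard_mono)

lemma source_run_meets_target:
  assumes low: "2 * d + 3 < a + q + c" and "J1 \<le> J2"
    and run: "\<And>J. J1 \<le> J \<Longrightarrow> J \<le> J2 \<Longrightarrow> chain_std d k0 J"
  shows "chain_std (Suc d) k0 J1 \<or> chain_std (Suc d) k0 (Suc J2)"
proof (rule ccontr)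
  assume "\<not> ?thesis"
  then have no_target: "\<not> chain_std (Suc d) k0 J1" "\<not> chain_std (Suc d) k0 (Suc J2)"
    by simp_all
  have "d + 2 \<le> b"
    using low aqc_le_b by linarith
  obtain u1 j1 where J1: "J1 = b * u1 + j1" "j1 < b" by (rule block_cases)
  obtain u2 j2 where J2: "J2 = b * u2 + j2" "j2 < b" by (rule block_cases)
  have "u1 = u2"
  proof (rule ccontr)
    assume "u1 \<noteq> u2"
    moreover have "u1 \<le> u2"
      using \<open>J1 \<le> J2\<close> J1 J2 by (intro block_mono[of u1 j1 u2 j2]) simp_all
    ultimately have "J1 \<le> b * u1 + (b - 1)" and "b * u1 + (b - 1) \<le> J2"
      using J1 J2 mult_le_mono2[of "Suc u1" u2 b] by auto
    then have "chain_std d k0 (b * u1 + (b - 1))"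
      by (rule run)
    then have "b + (k0 + g * u1) \<le> Suc d"
      by (rule chain_std_block_end)
    then show False
      using \<open>d + 2 \<le> b\<close> by simp
  qed
  have "j1 \<le> j2"
    using \<open>J1 \<le> J2\<close> J1 J2 \<open>u1 = u2\<close> by simp
  have "Suc j2 < b"
    using run[of J2] \<open>J1 \<le> J2\<close> J2 \<open>d + 2 \<le> b\<close> by (simp add: chain_std_block)
  moreover have "chain_std d k0 (b * u1 + j2)" and "\<not> chain_std (Suc d) k0 (b * u1 + Suc j2)"
    using run[of J2] no_target(2) \<open>J1 \<le> J2\<close> J2 \<open>u1 = u2\<close> by simp_all
  ultimately have "j2 < q"
    by (rule source_y_succ)
  have "chain_std d k0 (b * u1 + j1)" and "\<not> chain_std (Suc d) k0 (b * u1 + j1)"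
    using run[of J1] no_target(1) \<open>J1 \<le> J2\<close> J1 by simp_all
  then have "a \<le> Suc d"
    using \<open>j1 < b\<close> \<open>j1 \<le> j2\<close> \<open>j2 < q\<close> by (intro source_x_succ[of j1 d k0 u1]) simp_all
  then show False
    using low qc_le_a by linarith
qed

lemma no_target_at_wall:
  assumes "a + q + c \<le> 2 * d + 3"
  shows "\<not> chain_std (Suc d) k0 (b * u + q)"
proof
  assume "chain_std (Suc d) k0 (b * u + q)"
  then have "q + (k0 + g * u) \<le> Suc d" and "Suc d - (q + (k0 + g * u)) < p" and "k0 + g * u < r"
    using q_less_b by (auto simp: chain_std_block standard_triple)
  then show False
    using assms aqc_le_b a_eq b_eq c_eq by linarith
qed

lemma target_run_meets_source:
  assumes high: "a + q + c \<le> 2 * d + 3" and "J1 \<le> J2"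
    and left_end: "J1 = 0 \<or> \<not> chain_std d k0 (J1 - 1)"
    and targets: "\<And>J. J1 \<le> J \<Longrightarrow> J \<le> J2 \<Longrightarrow> chain_std (Suc d) k0 J"
  shows "chain_std d k0 J2"
proof (rule ccontr)
  assume no_source: "\<not> chain_std d k0 J2"
  obtain u1 j1 where J1: "J1 = b * u1 + j1" "j1 < b" by (rule block_cases)
  obtain u2 j2 where J2: "J2 = b * u2 + j2" "j2 < b" by (rule block_cases)
  have "j1 = 0"
  proof (rule ccontr)
    assume "j1 \<noteq> 0"
    then have "chain_std d k0 (b * u1 + (j1 - 1))"
      using targets[of J1] \<open>J1 \<le> J2\<close> J1 by (intro target_y_pred[of j1]) simp_all
    then show False
      using left_end \<open>j1 \<noteq> 0\<close> J1 by simp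
  qed
  then have "J1 = b * u1" and "k0 + g * u1 < c"
    using J1 targets[of J1] \<open>J1 \<le> J2\<close> chain_std_block[of 0 "Suc d" k0 u1] b_pos
    by (simp_all add: standard_triple)
  have "\<not> b * u1 + q \<le> J2"
    using targets[of "b * u1 + q"] no_target_at_wall[OF high] \<open>J1 = b * u1\<close> by auto
  then have "u2 \<le> u1"
    using J2 q_less_b by (intro block_mono[of u2 j2 u1 q]) simp_all
  moreover have "u1 \<le> u2"
    using \<open>J1 \<le> J2\<close> J1 J2 by (intro block_mono[of u1 j1 u2 j2]) simp_all
  ultimately have "u1 = u2" by simp
  then have "j2 < q"
    using \<open>\<not> b * u1 + q \<le> J2\<close> J2 by simp
  moreover have "j2 + (k0 + g * u2) = Suc d"
    using targets[of J2] no_source \<open>J1 \<le> J2\<close> J2 by (intro target_x_pred[of j2]) simp_all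
  moreover have "k0 + g * u2 < c"
    using \<open>u1 = u2\<close> \<open>k0 + g * u1 < c\<close> by simp
  ultimately show False
    using high qc_le_a by linarith
qed

lemma eq_0_if_chain_coeffs_vanish:
  assumes std: "\<forall>m\<in>Poly_Mapping.keys v. standard m" and "v \<in> homog d"
    and chains: "\<And>k0. k0 < g \<Longrightarrow> chain_coeff v d k0 = (\<lambda>_. 0)"
  shows "v = 0"
proof (rule poly_mapping_eqI)
  fix m
  show "Poly_Mapping.lookup v m = Poly_Mapping.lookup 0 m"
  proof (cases "m \<in> Poly_Mapping.keys v")
    case True
    then have "standard m" and "mdeg m = d"
      using assms(1,2) by (auto simp: homog_def)
    then obtain k0 J where "k0 < g" "chain_std d k0 J" "chain_mon d k0 J = m"
      by (rule chain_coords)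
    then have "Poly_Mapping.lookup v m = chain_coeff v d k0 J"
      by (simp add: chain_coeff_def chain_std_def)
    then show ?thesis
      using chains[OF \<open>k0 < g\<close>] by simp
  qed (simp add: in_keys_iff)
qed

lemma chain_coeff_kernel:
  assumes low: "2 * d + 3 < a + q + c" and "k0 < g"
    and std: "\<forall>m\<in>Poly_Mapping.keys v. standard m" and kernel: "nf ((varX + varY) * v) = 0"
  shows "chain_coeff v d k0 = (\<lambda>_. 0)"
proof (rule bidiag_kernel_trivial[where S = "{J. chain_std d k0 J}" and T = "{J. chain_std (Suc d) k0 J}"])
  show "finite {J. chain_std d k0 J}"
    by (rule finite_chain_std)
  show "J \<in> {J. chain_std d k0 J}" if "chain_coeff v d k0 J \<noteq> 0" for J
    using chain_coeff_nonzero[OF std that] by simp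
  show "bidiag (chain_coeff v d k0) J = 0" if "J \<in> {J. chain_std (Suc d) k0 J}" for J
    using lookup_nf_linear_form_chain[OF \<open>k0 < g\<close> _ std, of d J] that kernel by simp
  show "J1 \<in> {J. chain_std (Suc d) k0 J} \<or> Suc J2 \<in> {J. chain_std (Suc d) k0 J}"
    if "J1 \<le> J2" and "{J1..J2} \<subseteq> {J. chain_std d k0 J}" for J1 J2
    unfolding mem_Collect_eq by (rule source_run_meets_target[OF low that(1)]) (use that(2) in auto)
qed

lemma mult_inj_low_degree:
  assumes low: "2 * d + 3 < a + q + c"
  shows "mult_inj (ideal_gen gens) (varX + varY :: 'k::comm_ring_1 poly3) d"
  unfolding mult_inj_def
proof (intro ballI impI)
  fix f :: "'k poly3"
  assume "f \<in> homog d" and "(varX + varY) * f \<in> ideal_gen gens"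
  then have "nf ((varX + varY) * nf f) = 0"
    by (simp add: nf_mult_nf nf_eq_0_if_in_ideal)
  moreover have std: "\<forall>m\<in>Poly_Mapping.keys (nf f). standard m"
    using keys_nf_standard by blast
  ultimately have "nf f = 0"
    using \<open>f \<in> homog d\<close> chain_coeff_kernel[OF low]
    by (intro eq_0_if_chain_coeffs_vanish[of _ d]) (simp_all add: nf_homog)
  then show "f \<in> ideal_gen gens"
    by (simp add: nf_eq_0_iff)
qed

definition chain_poly :: "nat \<Rightarrow> nat \<Rightarrow> (nat \<Rightarrow> 'k::comm_ring_1) \<Rightarrow> 'k poly3" where
  "chain_poly d k0 w = (\<Sum>J\<in>{J. chain_std d k0 J}. Poly_Mapping.single (chain_mon d k0 J) (w J))"

lemma chain_poly_homog: "chain_poly d k0 w \<in> homog d"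
  unfolding chain_poly_def by (intro homog_sum homog_single) (simp add: chain_std_def mdeg_chain_mon)

lemma keys_chain_poly_standard: "\<forall>m\<in>Poly_Mapping.keys (chain_poly d k0 w). standard m"
proof
  fix m assume "m \<in> Poly_Mapping.keys (chain_poly d k0 w)"
  then have "m \<in> (\<Union>J\<in>{J. chain_std d k0 J}. Poly_Mapping.keys (Poly_Mapping.single (chain_mon d k0 J) (w J)))"
    unfolding chain_poly_def by (rule subsetD[OF keys_sum])
  then show "standard m"
    by (auto simp: chain_std_def split: if_splits)
qed

lemma chain_coeff_chain_poly:
  assumes "k0 < g" and "k0' < g" and supp: "\<And>J. w J \<noteq> 0 \<Longrightarrow> chain_std d k0 J"
  shows "chain_coeff (chain_poly d k0 w) d k0' = (if k0' = k0 then w else (\<lambda>_. 0))"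
proof
  fix J
  have "Poly_Mapping.lookup (chain_poly d k0 w) (chain_mon d k0' J)
      = (\<Sum>J'\<in>{J. chain_std d k0 J}. if k0' = k0 \<and> J' = J then w J' else 0)"
    unfolding chain_poly_def lookup_sum using chain_mon_inj[OF assms(1,2)]
    by (intro sum.cong) (auto simp: lookup_single when_def)
  also have "\<dots> = (if k0' = k0 \<and> chain_std d k0 J then w J else 0)"
    by (cases "k0' = k0") (simp_all add: finite_chain_std)
  finally show "chain_coeff (chain_poly d k0 w) d k0' J = (if k0' = k0 then w else (\<lambda>_. 0)) J"
    using supp by (fastforce simp: chain_coeff_def chain_std_def)
qed

lemma lookup_nf_linear_form_chain_poly:
  assumes "k0 < g" and "k0' < g" and "chain_std (Suc d) k0' J"
    and "\<And>J. w J \<noteq> 0 \<Longrightarrow> chain_std d k0 J"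
  shows "Poly_Mapping.lookup (nf ((varX + varY) * chain_poly d k0 w)) (chain_mon (Suc d) k0' J)
    = (if k0' = k0 then bidiag w J else 0)"
proof -
  have "Poly_Mapping.lookup (nf ((varX + varY) * chain_poly d k0 w)) (chain_mon (Suc d) k0' J)
      = bidiag (chain_coeff (chain_poly d k0 w) d k0') J"
    by (rule lookup_nf_linear_form_chain[OF assms(2,3) keys_chain_poly_standard])
  moreover have "chain_coeff (chain_poly d k0 w) d k0' = (if k0' = k0 then w else (\<lambda>_. 0))"
    by (rule chain_coeff_chain_poly[OF assms(1,2)]) (rule assms(4))
  ultimately show ?thesis
    by (simp add: bidiag_def split: nat.split)
qed

lemma linear_form_hits_standard_monomial:
  assumes high: "a + q + c \<le> 2 * d + 3" and "standard t" and "mdeg t = Suc d"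
  obtains v :: "'k::comm_ring_1 poly3"
  where "v \<in> homog d" and "nf ((varX + varY) * v) = Poly_Mapping.single t y"
proof -
  obtain k0 J0 where "k0 < g" and "chain_std (Suc d) k0 J0" and t: "chain_mon (Suc d) k0 J0 = t"
    using assms(2,3) by (rule chain_coords)
  let ?S = "{J. chain_std d k0 J}" and ?T = "{J. chain_std (Suc d) k0 J}"
  obtain w where supp: "\<And>J. w J \<noteq> 0 \<Longrightarrow> J \<in> ?S"
    and hits: "\<And>J. J \<in> ?T \<Longrightarrow> bidiag w J = (if J = J0 then y else 0)"
  proof (rule bidiag_unit_vector[where y = y])
    show "finite ?S" by (rule finite_chain_std)
    show "J0 \<in> ?T" using \<open>chain_std (Suc d) k0 J0\<close> by simp
    show "J2 \<in> ?S" if "J1 \<le> J2" and "J1 = 0 \<or> J1 - 1 \<notin> ?S"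
      and "{J1..J2} \<subseteq> ?T" and "{J1..<J2} \<subseteq> ?S" for J1 J2
      unfolding mem_Collect_eq by (rule target_run_meets_source[OF high that(1)]) (use that(2,3) in auto)
  qed blast
  let ?v = "chain_poly d k0 w"
  have "Poly_Mapping.lookup (nf ((varX + varY) * ?v)) m = Poly_Mapping.lookup (Poly_Mapping.single t y) m" for m
  proof (cases "standard m \<and> mdeg m = Suc d")
    case True
    then obtain k0' J where "k0' < g" and "chain_std (Suc d) k0' J" and m: "chain_mon (Suc d) k0' J = m"
      using chain_coords by blast
    moreover have "t = m \<longleftrightarrow> k0' = k0 \<and> J = J0"
      using chain_mon_inj[OF \<open>k0 < g\<close> \<open>k0' < g\<close>, of "Suc d" J0 J] t m by auto
    ultimately show ?thesis
      using lookup_nf_linear_form_chain_poly[OF \<open>k0 < g\<close>, of k0' d J w] supp hits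
      by (auto simp: lookup_single when_def)
  next
    case False
    have "nf ((varX + varY) * ?v) \<in> homog (Suc d)"
      using homog_mult[OF linear_form_homog chain_poly_homog[of d k0 w]] by (intro nf_homog) simp
    then have "m \<notin> Poly_Mapping.keys (nf ((varX + varY) * ?v))"
      using False keys_nf_standard[of m] by (auto simp: homog_def)
    moreover have "m \<noteq> t"
      using False assms(2,3) by auto
    ultimately show ?thesis
      by (simp add: in_keys_iff lookup_single when_def)
  qed
  then show thesis
    using that chain_poly_homog poly_mapping_eqI by blast
qed

lemma mult_surj_high_degree:
  assumes high: "a + q + c \<le> 2 * d + 3"
  shows "mult_surj (ideal_gen gens) (varX + varY :: 'k::comm_ring_1 poly3) d"
  unfolding mult_surj_def
proof
  fix G :: "'k poly3"
  assume "G \<in> homog (Suc d)"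
  define z where "z = nf G"
  have "z \<in> homog (Suc d)"
    using \<open>G \<in> homog (Suc d)\<close> by (simp add: z_def nf_homog)
  have "\<exists>v\<in>homog d. nf ((varX + varY) * v) = Poly_Mapping.single t (Poly_Mapping.lookup z t)"
    if "t \<in> Poly_Mapping.keys z" for t
  proof -
    have "standard t" and "mdeg t = Suc d"
      using that keys_nf_standard[of t G] \<open>z \<in> homog (Suc d)\<close> by (auto simp: z_def homog_def)
    then show ?thesis
      using linear_form_hits_standard_monomial[OF high] by metis
  qed
  then obtain V where V: "\<And>t. t \<in> Poly_Mapping.keys z \<Longrightarrow>
      V t \<in> homog d \<and> nf ((varX + varY) * V t) = Poly_Mapping.single t (Poly_Mapping.lookup z t)"
    by metis
  define f where "f = (\<Sum>t\<in>Poly_Mapping.keys z. V t)"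
  have "f \<in> homog d"
    unfolding f_def using V by (intro homog_sum) auto
  have "nf ((varX + varY) * f) = (\<Sum>t\<in>Poly_Mapping.keys z. Poly_Mapping.single t (Poly_Mapping.lookup z t))"
    unfolding f_def sum_distrib_left nf_sum using V by simp
  also have "\<dots> = nf G"
    by (simp add: z_def flip: poly_mapping_sum_single)
  finally have "G - (varX + varY) * f \<in> ideal_gen gens"
    by (simp add: nf_diff flip: nf_eq_0_iff)
  then show "\<exists>f\<in>homog d. G - (varX + varY) * f \<in> ideal_gen gens"
    using \<open>f \<in> homog d\<close> by blast
qed

theorem has_WLP_gens: "has_WLP (ideal_gen gens :: 'k::comm_ring_1 poly3 set)"
  unfolding has_WLP_def
  using linear_form_homog mult_inj_low_degree mult_surj_high_degree not_less by blast

end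

theorem theorem3p6:
  fixes a b c \<beta> \<gamma> :: int
  assumes "a \<ge> c" and "c \<ge> 2"
    and "1 \<le> \<beta>" and "\<beta> \<le> b - 1"
    and "max 1 (b - a + 1) \<le> \<gamma>" and "\<gamma> \<le> min (b - 1) (c - 1)"
    and "a \<le> 2 * b - c"
    and "\<bar>a - b\<bar> + c - 1 \<le> \<beta>"
  shows "has_WLP (ideal_gen
          [ varX ^ nat a,
            varY ^ nat b - varX ^ nat (b - \<gamma>) * varZ ^ nat \<gamma>,
            varZ ^ nat c,
            varX ^ nat (a - b + \<gamma>) * varY ^ nat (b - \<beta>),
            varY ^ nat (b - \<beta>) * varZ ^ nat (c - \<gamma>) ]
          :: 'k::field_char_0 poly3 set)"
proof -
  interpret wlp_ideal "nat a" "nat b" "nat c" "nat \<gamma>" "nat (a - b + \<gamma>)" "nat (b - \<beta>)" "nat (c - \<gamma>)" "nat (b - \<gamma>)"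
    using assms by unfold_locales (auto simp: max_def min_def abs_if split: if_splits)
  have "[ varX ^ nat a,
          varY ^ nat b - varX ^ nat (b - \<gamma>) * varZ ^ nat \<gamma>,
          varZ ^ nat c,
          varX ^ nat (a - b + \<gamma>) * varY ^ nat (b - \<beta>),
          varY ^ nat (b - \<beta>) * varZ ^ nat (c - \<gamma>) ] = (gens :: 'k poly3 list)"
    by (simp add: gens_def varX_power varY_power varZ_power mult_single)
  then show ?thesis
    using has_WLP_gens by simp
qed

end
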